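(* Let $\mathcal A=\{r_0,\dots,r_m\}\subset\mathbb Z^n$ with $\mathbb Z\mathcal A=\mathbb Z^n$ and $k\in\mathbb N$. Then $\operatorname{trop}(X^{(k)}_{\mathcal A})$ is empty (equivalently, $X^{(k)}_{\mathcal A}$ does not intersect the torus $T_m=\{x\in(\mathbb P^m)^\vee: x_i\ne0\text{ for all }i\}$) if and only if there exists a polynomial $Q$ in $n$ variables of degree at most $k$ which vanishes at all points of $\mathcal A$ but one.
   Context: $X_{\mathcal A}\subset\mathbb P^m$ is the closure of the image of $(\mathbb C^* )^n\to\mathbb P^m$, $x\mapsto(x^{r_0}:\dots:x^{r_m})$. $X^{(k)}_{\mathcal A}\subset(\mathbb P^m)^\vee$ is its $k$-th dual variety: the closure of the set of hyperplanes containing the $k$-th osculating space $\mathbb P(\operatorname{Im}j_{k,x})$ at some smooth point $x$, where $j_{k,x}$ is the Taylor expansion to order $k$. For a projective variety $X\subset\mathbb P^m$ with affine cone $Y$ and ideal $I$ defined over $\mathbb Q$, $\operatorname{trop}(Y)=\{w\in\mathbb R^{m+1}:\operatorname{in}_w(F)\text{ is not a monomial for all }0\ne F\in I\}$ and $\operatorname{trop}(X)$ is the image of $\operatorname{trop}(Y)$ in $\mathbb R^{m+1}/\mathbb R(1,\dots,1)$. *)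

theory Defs
  imports "HOL-Analysis.Analysis" "HOL-Library.Poly_Mapping"
begin

text \<open>A polynomial in variables x_0, x_1, ... with coefficients in 'c is an element of
  (nat =>0 nat) =>0 'c: a finitely supported map from exponent vectors to coefficients.\<close>

type_synonym 'c mpoly = "(nat \<Rightarrow>\<^sub>0 nat) \<Rightarrow>\<^sub>0 'c"

definition vars_below :: "nat \<Rightarrow> 'c::zero mpoly \<Rightarrow> bool" where
  "vars_below N F \<longleftrightarrow> (\<forall>u::nat \<Rightarrow>\<^sub>0 nat. u \<in> Poly_Mapping.keys F \<longrightarrow> (\<forall>i \<in> Poly_Mapping.keys u. i < N))"

definition total_deg :: "(nat \<Rightarrow>\<^sub>0 nat) \<Rightarrow> nat" where
  "total_deg u = (\<Sum>i\<in>Poly_Mapping.keys u. Poly_Mapping.lookup u i)"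

definition eval_c :: "complex mpoly \<Rightarrow> (nat \<Rightarrow> complex) \<Rightarrow> complex" where
  "eval_c F a = (\<Sum>u\<in>Poly_Mapping.keys F. Poly_Mapping.lookup F u * (\<Prod>i\<in>Poly_Mapping.keys u. a i ^ Poly_Mapping.lookup u i))"

definition eval_q :: "rat mpoly \<Rightarrow> (nat \<Rightarrow> complex) \<Rightarrow> complex" where
  "eval_q F a = (\<Sum>u\<in>Poly_Mapping.keys F. of_rat (Poly_Mapping.lookup F u) * (\<Prod>i\<in>Poly_Mapping.keys u. a i ^ Poly_Mapping.lookup u i))"

definition aff_space :: "nat \<Rightarrow> (nat \<Rightarrow> complex) set" where
  "aff_space m = {a. \<forall>i>m. a i = 0}"

definition zariski_closure :: "nat \<Rightarrow> (nat \<Rightarrow> complex) set \<Rightarrow> (nat \<Rightarrow> complex) set" where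
  "zariski_closure m S = {a \<in> aff_space m. \<forall>F. vars_below (Suc m) F \<longrightarrow>
       (\<forall>b\<in>S. eval_c F b = 0) \<longrightarrow> eval_c F a = 0}"

definition laurent_mono :: "nat \<Rightarrow> (nat \<Rightarrow> int) \<Rightarrow> (nat \<Rightarrow> complex) \<Rightarrow> complex" where
  "laurent_mono n r x = (\<Prod>j<n. x j powi r j)"

definition partial :: "nat \<Rightarrow> ((nat \<Rightarrow> complex) \<Rightarrow> complex) \<Rightarrow> (nat \<Rightarrow> complex) \<Rightarrow> complex" where
  "partial j f x = deriv (\<lambda>t. f (x(j := t))) (x j)"

definition higher_partial :: "nat \<Rightarrow> (nat \<Rightarrow> nat) \<Rightarrow> ((nat \<Rightarrow> complex) \<Rightarrow> complex)
    \<Rightarrow> (nat \<Rightarrow> complex) \<Rightarrow> complex" where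
  "higher_partial n \<alpha> f = foldr (\<lambda>j g. (partial j ^^ \<alpha> j) g) [0..<n] f"

definition torus_pt :: "nat \<Rightarrow> (nat \<Rightarrow> complex) \<Rightarrow> bool" where
  "torus_pt n x \<longleftrightarrow> (\<forall>j<n. x j \<noteq> 0)"

text \<open>The hyperplane with (dual) coordinates a contains the k-th osculating space
  P(Im j_{k,x}) of X_A at the point x^A, i.e. a annihilates all partial derivatives
  of order at most k of the lift x \<mapsto> (x^{r_0},...,x^{r_m}) at x.\<close>
definition contains_osc :: "nat \<Rightarrow> nat \<Rightarrow> (nat \<Rightarrow> nat \<Rightarrow> int) \<Rightarrow> nat
    \<Rightarrow> (nat \<Rightarrow> complex) \<Rightarrow> (nat \<Rightarrow> complex) \<Rightarrow> bool" where
  "contains_osc n m r k x a \<longleftrightarrow>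
     (\<forall>\<alpha>::nat\<Rightarrow>nat. (\<Sum>j<n. \<alpha> j) \<le> k \<longrightarrow>
        (\<Sum>i\<le>m. a i * higher_partial n \<alpha> (laurent_mono n (r i)) x) = 0)"

text \<open>Affine cone (minus the origin) over the set of hyperplanes osculating to order k.\<close>
definition osc_hyperplanes :: "nat \<Rightarrow> nat \<Rightarrow> (nat \<Rightarrow> nat \<Rightarrow> int) \<Rightarrow> nat
    \<Rightarrow> (nat \<Rightarrow> complex) set" where
  "osc_hyperplanes n m r k = {a \<in> aff_space m. (\<exists>i\<le>m. a i \<noteq> 0) \<and>
       (\<exists>x. torus_pt n x \<and> contains_osc n m r k x a)}"

text \<open>Affine cone Y over the k-th dual variety X^(k)_A (Zariski closure).\<close>
definition dual_cone :: "nat \<Rightarrow> nat \<Rightarrow> (nat \<Rightarrow> nat \<Rightarrow> int) \<Rightarrow> nat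
    \<Rightarrow> (nat \<Rightarrow> complex) set" where
  "dual_cone n m r k = zariski_closure m (osc_hyperplanes n m r k)"

definition ideal_Q :: "nat \<Rightarrow> (nat \<Rightarrow> complex) set \<Rightarrow> rat mpoly set" where
  "ideal_Q m Y = {F. vars_below (Suc m) F \<and> (\<forall>a\<in>Y. eval_q F a = 0)}"

definition wt :: "(nat \<Rightarrow> real) \<Rightarrow> (nat \<Rightarrow>\<^sub>0 nat) \<Rightarrow> real" where
  "wt w u = (\<Sum>i\<in>Poly_Mapping.keys u. w i * real (Poly_Mapping.lookup u i))"

text \<open>Initial form (min convention): the terms of F of minimal w-weight.\<close>
definition init_form :: "(nat \<Rightarrow> real) \<Rightarrow> rat mpoly \<Rightarrow> rat mpoly" where
  "init_form w F = Abs_poly_mapping (\<lambda>u. if u \<in> Poly_Mapping.keys F \<and> wt w u = Min (wt w ` Poly_Mapping.keys F)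
                                         then Poly_Mapping.lookup F u else 0)"

definition is_monomial :: "rat mpoly \<Rightarrow> bool" where
  "is_monomial G \<longleftrightarrow> (\<exists>u c. c \<noteq> 0 \<and> G = Poly_Mapping.single u c)"

definition trop_cone :: "nat \<Rightarrow> (nat \<Rightarrow> complex) set \<Rightarrow> (nat \<Rightarrow> real) set" where
  "trop_cone m Y = {w. (\<forall>i>m. w i = 0) \<and>
      (\<forall>F\<in>ideal_Q m Y. F \<noteq> 0 \<longrightarrow> \<not> is_monomial (init_form w F))}"

text \<open>trop(X): image of trop(Y) in R^(m+1)/R(1,...,1); classes represented as sets.\<close>
definition trop_proj :: "nat \<Rightarrow> (nat \<Rightarrow> complex) set \<Rightarrow> (nat \<Rightarrow> real) set set" where
  "trop_proj m Y = (\<lambda>w. {v. (\<forall>i>m. v i = 0) \<and> (\<exists>c::real. \<forall>i\<le>m. v i = w i + c)}) ` trop_cone m Y"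

end

theory Submission
  imports Defs
begin

text \<open>
  Differentiating the monomial parametrization shows that, at a torus point x, the hyperplane a
  contains the k-th osculating space iff the rescaled vector (a_i x^r_i)_i annihilates the
  values at r_0, ..., r_m of all falling-factorial monomials of degree at most k; these span
  all polynomials of degree at most k. If some such Q vanishes at every r_i but r_i0, every
  osculating hyperplane therefore has a_i0 = 0, so the coordinate x_i0 lies in the ideal of the
  dual cone and every initial form of it is a monomial. Otherwise, by the Fredholm alternative,
  for every i some annihilating vector has a nonzero i-th entry, and a generic combination of
  these vectors has all entries nonzero: it is an osculating hyperplane at x = (1, ..., 1)
  lying in the torus, and then the zero weight belongs to the tropicalization.
\<close>

section \<open>Polynomial functions and falling-factorial monomials\<close>

definition eval_monomial :: "(nat \<Rightarrow>\<^sub>0 nat) \<Rightarrow> (nat \<Rightarrow> complex) \<Rightarrow> complex" where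
  "eval_monomial u z = (\<Prod>i\<in>Poly_Mapping.keys u. z i ^ Poly_Mapping.lookup u i)"

definition mpoly_deg_le :: "nat \<Rightarrow> nat \<Rightarrow> complex mpoly \<Rightarrow> bool" where
  "mpoly_deg_le n d Q \<longleftrightarrow> vars_below n Q \<and> (\<forall>u\<in>Poly_Mapping.keys Q. total_deg u \<le> d)"

lemma eval_monomial_superset:
  assumes "finite K" "Poly_Mapping.keys u \<subseteq> K"
  shows "eval_monomial u z = (\<Prod>i\<in>K. z i ^ Poly_Mapping.lookup u i)"
  unfolding eval_monomial_def
  by (rule prod.mono_neutral_left[OF assms]) (simp add: in_keys_iff)

lemma total_deg_superset:
  assumes "finite K" "Poly_Mapping.keys u \<subseteq> K"
  shows "total_deg u = (\<Sum>i\<in>K. Poly_Mapping.lookup u i)"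
  unfolding total_deg_def
  by (rule sum.mono_neutral_left[OF assms]) (simp add: in_keys_iff)

lemma eval_c_eq_sum_monomials:
  "eval_c F z = (\<Sum>u\<in>Poly_Mapping.keys F. Poly_Mapping.lookup F u * eval_monomial u z)"
  unfolding eval_c_def eval_monomial_def by simp

lemma eval_c_superset:
  assumes "finite K" "Poly_Mapping.keys F \<subseteq> K"
  shows "eval_c F z = (\<Sum>u\<in>K. Poly_Mapping.lookup F u * eval_monomial u z)"
  unfolding eval_c_eq_sum_monomials
  by (rule sum.mono_neutral_left[OF assms]) (simp add: in_keys_iff)

lemma eval_c_add: "eval_c (F + G) z = eval_c F z + eval_c G z"
proof -
  let ?K = "Poly_Mapping.keys F \<union> Poly_Mapping.keys G"
  have "eval_c (F + G) z = (\<Sum>u\<in>?K. Poly_Mapping.lookup (F + G) u * eval_monomial u z)"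
    by (rule eval_c_superset) (auto dest: subsetD[OF keys_add])
  also have "\<dots> = eval_c F z + eval_c G z"
    by (simp add: lookup_add distrib_right sum.distrib eval_c_superset[symmetric])
  finally show ?thesis .
qed

lemma eval_c_single: "eval_c (Poly_Mapping.single u c) z = c * eval_monomial u z"
  by (simp add: eval_c_eq_sum_monomials)

lemma eval_c_sum_singles:
  assumes "finite U"
  shows "eval_c (\<Sum>u\<in>U. Poly_Mapping.single (f u) (c u)) z = (\<Sum>u\<in>U. c u * eval_monomial (f u) z)"
proof -
  have "eval_c (\<Sum>u\<in>U. G u) z = (\<Sum>u\<in>U. eval_c (G u) z)" for G
    using assms by (induction U rule: finite_induct) (simp_all add: eval_c_add eval_c_def[of 0])
  then show ?thesis by (simp add: eval_c_single)
qed

lemma keys_sum_singles: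
  "Poly_Mapping.keys (\<Sum>u\<in>U. Poly_Mapping.single (f u) (c u)) \<subseteq> f ` U"
  using keys_sum[of "\<lambda>u. Poly_Mapping.single (f u) (c u)" U] by (auto split: if_splits)

lemma keys_single_add:
  "Poly_Mapping.keys (Poly_Mapping.single j (1::nat) + u) = insert j (Poly_Mapping.keys u)"
  by (auto simp: in_keys_iff lookup_add lookup_single when_def split: if_splits)

lemma eval_monomial_single_add:
  "eval_monomial (Poly_Mapping.single j 1 + u) z = z j * eval_monomial u z"
proof -
  let ?K = "insert j (Poly_Mapping.keys u)"
  have "eval_monomial (Poly_Mapping.single j 1 + u) z =
      (\<Prod>i\<in>?K. z i ^ Poly_Mapping.lookup (Poly_Mapping.single j 1 + u) i)"
    by (rule eval_monomial_superset) (use keys_single_add[of j u] in auto)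
  also have "\<dots> = (\<Prod>i\<in>?K. (if i = j then z i else 1) * z i ^ Poly_Mapping.lookup u i)"
    by (rule prod.cong) (auto simp: lookup_add lookup_single)
  also have "\<dots> = z j * (\<Prod>i\<in>?K. z i ^ Poly_Mapping.lookup u i)"
    by (simp add: prod.distrib prod.delta)
  also have "(\<Prod>i\<in>?K. z i ^ Poly_Mapping.lookup u i) = eval_monomial u z"
    by (rule eval_monomial_superset[symmetric]) auto
  finally show ?thesis .
qed

lemma total_deg_single_add:
  "total_deg (Poly_Mapping.single j 1 + u) = Suc (total_deg u)"
proof -
  let ?K = "insert j (Poly_Mapping.keys u)"
  have "total_deg (Poly_Mapping.single j 1 + u) =
      (\<Sum>i\<in>?K. Poly_Mapping.lookup (Poly_Mapping.single j 1 + u) i)"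
    by (rule total_deg_superset) (use keys_single_add[of j u] in auto)
  also have "\<dots> = (\<Sum>i\<in>?K. if i = j then 1 else 0) + (\<Sum>i\<in>?K. Poly_Mapping.lookup u i)"
    by (simp add: lookup_add lookup_single sum.distrib when_def)
  also have "(\<Sum>i\<in>?K. Poly_Mapping.lookup u i) = total_deg u"
    by (rule total_deg_superset[symmetric]) auto
  finally show ?thesis by simp
qed

(* The simplifier rewrites single j 1 to single j (Suc 0), so these forms are the usable ones. *)
lemmas single_Suc0_add [simp] =
  keys_single_add[unfolded One_nat_def] eval_monomial_single_add[unfolded One_nat_def]
  total_deg_single_add[unfolded One_nat_def]

inductive poly_fun :: "nat \<Rightarrow> nat \<Rightarrow> ((nat \<Rightarrow> complex) \<Rightarrow> complex) \<Rightarrow> bool" for n where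
  one: "poly_fun n d (\<lambda>z. 1)"
| var: "poly_fun n d g \<Longrightarrow> j < n \<Longrightarrow> poly_fun n (Suc d) (\<lambda>z. z j * g z)"
| add: "poly_fun n d f \<Longrightarrow> poly_fun n d g \<Longrightarrow> poly_fun n d (\<lambda>z. f z + g z)"
| scale: "poly_fun n d g \<Longrightarrow> poly_fun n d (\<lambda>z. c * g z)"
| mono: "poly_fun n d g \<Longrightarrow> d \<le> d' \<Longrightarrow> poly_fun n d' g"

lemma mpoly_var_mult:
  assumes Q: "mpoly_deg_le n d Q" and j: "j < n"
  shows "\<exists>Q'. mpoly_deg_le n (Suc d) Q' \<and> eval_c Q' = (\<lambda>z. z j * eval_c Q z)"
proof -
  define Q' where "Q' = (\<Sum>u\<in>Poly_Mapping.keys Q.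
      Poly_Mapping.single (Poly_Mapping.single j 1 + u) (Poly_Mapping.lookup Q u))"
  have K: "Poly_Mapping.keys Q' \<subseteq> (\<lambda>u. Poly_Mapping.single j 1 + u) ` Poly_Mapping.keys Q"
    unfolding Q'_def by (rule keys_sum_singles)
  have "mpoly_deg_le n (Suc d) Q'"
    using Q j by (auto simp: mpoly_deg_le_def vars_below_def dest!: K[THEN subsetD])
  moreover have "eval_c Q' z = z j * eval_c Q z" for z
  proof -
    have "eval_c Q' z = (\<Sum>u\<in>Poly_Mapping.keys Q.
        Poly_Mapping.lookup Q u * eval_monomial (Poly_Mapping.single j 1 + u) z)"
      unfolding Q'_def by (rule eval_c_sum_singles) simp
    then show ?thesis
      by (simp add: eval_c_eq_sum_monomials sum_distrib_left mult_ac)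
  qed
  ultimately show ?thesis by blast
qed

lemma mpoly_scalar_mult:
  assumes Q: "mpoly_deg_le n d Q"
  shows "\<exists>Q'. mpoly_deg_le n d Q' \<and> eval_c Q' = (\<lambda>z. c * eval_c Q z)"
proof -
  define Q' where "Q' = (\<Sum>u\<in>Poly_Mapping.keys Q. Poly_Mapping.single u (c * Poly_Mapping.lookup Q u))"
  have "Poly_Mapping.keys Q' \<subseteq> Poly_Mapping.keys Q"
    using keys_sum_singles[of "\<lambda>u. u"] unfolding Q'_def by simp
  then have "mpoly_deg_le n d Q'"
    using Q by (auto simp: mpoly_deg_le_def vars_below_def)
  moreover have "eval_c Q' z = c * eval_c Q z" for z
  proof -
    have "eval_c Q' z = (\<Sum>u\<in>Poly_Mapping.keys Q. (c * Poly_Mapping.lookup Q u) * eval_monomial u z)"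
      unfolding Q'_def by (rule eval_c_sum_singles) simp
    then show ?thesis
      by (simp add: eval_c_eq_sum_monomials sum_distrib_left mult_ac)
  qed
  ultimately show ?thesis by blast
qed

lemma mpoly_add:
  assumes "mpoly_deg_le n d Q1" "mpoly_deg_le n d Q2"
  shows "mpoly_deg_le n d (Q1 + Q2) \<and> eval_c (Q1 + Q2) = (\<lambda>z. eval_c Q1 z + eval_c Q2 z)"
  using assms keys_add[of Q1 Q2] by (auto simp: mpoly_deg_le_def vars_below_def eval_c_add)

lemma poly_fun_imp_mpoly: "poly_fun n d g \<Longrightarrow> \<exists>Q. mpoly_deg_le n d Q \<and> eval_c Q = g"
proof (induction rule: poly_fun.induct)
  case (one d)
  have "mpoly_deg_le n d (Poly_Mapping.single 0 1) \<and> eval_c (Poly_Mapping.single 0 1) = (\<lambda>z. 1)"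
    by (simp add: mpoly_deg_le_def vars_below_def eval_c_def total_deg_def fun_eq_iff)
  then show ?case by blast
next
  case (var d g j)
  then show ?case using mpoly_var_mult by blast
next
  case (add d f g)
  then show ?case using mpoly_add by blast
next
  case (scale d g c)
  then show ?case using mpoly_scalar_mult by blast
next
  case (mono d g d')
  then show ?case by (force simp: mpoly_deg_le_def)
qed

lemma poly_fun_mult:
  "poly_fun n d1 f \<Longrightarrow> poly_fun n d2 g \<Longrightarrow> poly_fun n (d1 + d2) (\<lambda>z. f z * g z)"
proof (induction arbitrary: g rule: poly_fun.induct)
  case (one d)
  have "poly_fun n (d + d2) g" by (rule poly_fun.mono[OF one]) simp
  then show ?case by simp
next
  case (var d f j)
  have "poly_fun n (Suc (d + d2)) (\<lambda>z. z j * (f z * g z))"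
    by (rule poly_fun.var[OF var.IH[OF var.prems] var.hyps(2)])
  then show ?case by (simp add: mult.assoc)
next
  case (add d f1 f2)
  have "poly_fun n (d + d2) (\<lambda>z. f1 z * g z + f2 z * g z)"
    by (rule poly_fun.add[OF add.IH(1)[OF add.prems] add.IH(2)[OF add.prems]])
  then show ?case by (simp add: distrib_right)
next
  case (scale d f c)
  have "poly_fun n (d + d2) (\<lambda>z. c * (f z * g z))"
    by (rule poly_fun.scale[OF scale.IH[OF scale.prems]])
  then show ?case by (simp add: mult.assoc)
next
  case (mono d f d')
  show ?case by (rule poly_fun.mono[OF mono.IH[OF mono.prems]]) (use mono.hyps in simp)
qed

lemma poly_fun_const: "poly_fun n d (\<lambda>z. c)"
  using poly_fun.scale[OF poly_fun.one, of n d c] by simp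

lemma poly_fun_sum:
  "finite I \<Longrightarrow> (\<And>i. i \<in> I \<Longrightarrow> poly_fun n d (f i)) \<Longrightarrow> poly_fun n d (\<lambda>z. \<Sum>i\<in>I. f i z)"
  by (induction I rule: finite_induct) (simp_all add: poly_fun_const poly_fun.add)

lemma poly_fun_prod:
  "finite I \<Longrightarrow> (\<And>i. i \<in> I \<Longrightarrow> poly_fun n (d i) (f i)) \<Longrightarrow>
    poly_fun n (\<Sum>i\<in>I. d i) (\<lambda>z. \<Prod>i\<in>I. f i z)"
  by (induction I rule: finite_induct) (simp_all add: poly_fun.one poly_fun_mult)

lemma poly_fun_var: "j < n \<Longrightarrow> poly_fun n 1 (\<lambda>z. z j)"
  using poly_fun.var[OF poly_fun.one, of j n 0] by simp

lemma poly_fun_pow: "j < n \<Longrightarrow> poly_fun n e (\<lambda>z. z j ^ e)"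
  using poly_fun_prod[of "{..<e}" n "\<lambda>_. 1" "\<lambda>_ z. z j"] poly_fun_var[of j n] by simp

lemma poly_fun_eval_c:
  assumes Q: "mpoly_deg_le n d Q"
  shows "poly_fun n d (eval_c Q)"
  unfolding eval_c_eq_sum_monomials[abs_def]
proof (rule poly_fun_sum)
  fix u assume u: "u \<in> Poly_Mapping.keys Q"
  have "poly_fun n (total_deg u) (eval_monomial u)"
    unfolding eval_monomial_def total_deg_def
  proof (rule poly_fun_prod)
    fix i assume "i \<in> Poly_Mapping.keys u"
    then have "i < n" using u Q by (simp add: mpoly_deg_le_def vars_below_def)
    then show "poly_fun n (Poly_Mapping.lookup u i) (\<lambda>z. z i ^ Poly_Mapping.lookup u i)"
      by (rule poly_fun_pow)
  qed simp
  moreover have "total_deg u \<le> d"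
    using u Q by (simp add: mpoly_deg_le_def)
  ultimately show "poly_fun n d (\<lambda>z. Poly_Mapping.lookup Q u * eval_monomial u z)"
    by (rule poly_fun.scale[OF poly_fun.mono])
qed simp

definition falling_monomial :: "nat \<Rightarrow> (nat \<Rightarrow> nat) \<Rightarrow> (nat \<Rightarrow> complex) \<Rightarrow> complex" where
  "falling_monomial n \<alpha> z = (\<Prod>j<n. \<Prod>l<\<alpha> j. (z j - of_nat l))"

definition multidegree :: "nat \<Rightarrow> (nat \<Rightarrow> nat) \<Rightarrow> nat" where
  "multidegree n \<alpha> = (\<Sum>j<n. \<alpha> j)"

inductive ff_span :: "nat \<Rightarrow> nat \<Rightarrow> ((nat \<Rightarrow> complex) \<Rightarrow> complex) \<Rightarrow> bool" for n where
  gen: "multidegree n \<alpha> \<le> d \<Longrightarrow> ff_span n d (falling_monomial n \<alpha>)"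
| add: "ff_span n d f \<Longrightarrow> ff_span n d g \<Longrightarrow> ff_span n d (\<lambda>z. f z + g z)"
| scale: "ff_span n d g \<Longrightarrow> ff_span n d (\<lambda>z. c * g z)"

lemma ff_span_mono: "ff_span n d g \<Longrightarrow> d \<le> d' \<Longrightarrow> ff_span n d' g"
  by (induction rule: ff_span.induct) (auto intro: ff_span.intros)

lemma ff_span_sum:
  assumes "finite I" "\<And>i. i \<in> I \<Longrightarrow> ff_span n d (f i)"
  shows "ff_span n d (\<lambda>z. \<Sum>i\<in>I. f i z)"
  using assms
proof (induction I rule: finite_induct)
  case empty
  have "ff_span n d (\<lambda>z. 0 * falling_monomial n (\<lambda>_. 0) z)"
    by (intro ff_span.intros) (simp add: multidegree_def)
  then show ?case by simp
next
  case (insert i I)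
  then show ?case by (simp add: ff_span.add)
qed

lemma poly_fun_falling_monomial: "poly_fun n (multidegree n \<alpha>) (falling_monomial n \<alpha>)"
  unfolding falling_monomial_def multidegree_def
proof (rule poly_fun_prod)
  fix j assume "j \<in> {..<n}"
  then have "poly_fun n 1 (\<lambda>z. z j + (- of_nat l))" for l
    by (intro poly_fun.add poly_fun_var poly_fun_const) simp
  then have "poly_fun n (\<Sum>l<\<alpha> j. 1) (\<lambda>z. \<Prod>l<\<alpha> j. (z j - of_nat l))"
    by (intro poly_fun_prod) simp_all
  then show "poly_fun n (\<alpha> j) (\<lambda>z. \<Prod>l<\<alpha> j. (z j - of_nat l))" by simp
qed simp

lemma ff_span_imp_poly_fun: "ff_span n d g \<Longrightarrow> poly_fun n d g"
  by (induction rule: ff_span.induct)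
    (auto intro: poly_fun.add poly_fun.scale poly_fun.mono[OF poly_fun_falling_monomial])

lemma var_times_falling_monomial:
  assumes "j < n"
  shows "z j * falling_monomial n \<alpha> z =
    falling_monomial n (\<alpha>(j := Suc (\<alpha> j))) z + of_nat (\<alpha> j) * falling_monomial n \<alpha> z"
proof -
  have split: "falling_monomial n \<beta> z =
      (\<Prod>l<\<beta> j. (z j - of_nat l)) * (\<Prod>i\<in>{..<n}-{j}. \<Prod>l<\<beta> i. (z i - of_nat l))" for \<beta>
    unfolding falling_monomial_def using assms by (simp add: prod.remove)
  have "(\<Prod>i\<in>{..<n}-{j}. \<Prod>l<(\<alpha>(j := Suc (\<alpha> j))) i. (z i - of_nat l)) =
      (\<Prod>i\<in>{..<n}-{j}. \<Prod>l<\<alpha> i. (z i - of_nat l))"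
    by (rule prod.cong) auto
  then show ?thesis
    unfolding split[of \<alpha>] split[of "\<alpha>(j := Suc (\<alpha> j))"] by (simp add: algebra_simps)
qed

lemma multidegree_update_Suc:
  "j < n \<Longrightarrow> multidegree n (\<alpha>(j := Suc (\<alpha> j))) = Suc (multidegree n \<alpha>)"
  unfolding multidegree_def by (simp add: sum.remove[of "{..<n}" j])

lemma ff_span_var: "ff_span n d g \<Longrightarrow> j < n \<Longrightarrow> ff_span n (Suc d) (\<lambda>z. z j * g z)"
proof (induction rule: ff_span.induct)
  case (gen \<alpha> d)
  have "ff_span n (Suc d) (\<lambda>z. falling_monomial n (\<alpha>(j := Suc (\<alpha> j))) z
      + of_nat (\<alpha> j) * falling_monomial n \<alpha> z)"
    using gen multidegree_update_Suc[of j n \<alpha>] by (intro ff_span.intros) auto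
  then show ?case by (simp add: var_times_falling_monomial[OF gen.prems])
next
  case (add d f g)
  then show ?case by (simp add: distrib_left ff_span.add)
next
  case (scale d g c)
  then show ?case by (simp add: mult.left_commute ff_span.scale)
qed

lemma poly_fun_imp_ff_span: "poly_fun n d g \<Longrightarrow> ff_span n d g"
proof (induction rule: poly_fun.induct)
  case (one d)
  have "ff_span n d (falling_monomial n (\<lambda>_. 0))"
    by (rule ff_span.gen) (simp add: multidegree_def)
  moreover have "falling_monomial n (\<lambda>_. 0) = (\<lambda>z. 1)"
    by (simp add: falling_monomial_def fun_eq_iff)
  ultimately show ?case by simp
qed (auto intro: ff_span.add ff_span.scale ff_span_var ff_span_mono)

definition vanishes_at_all_but_one ::
    "((nat \<Rightarrow> complex) \<Rightarrow> complex) \<Rightarrow> nat \<Rightarrow> (nat \<Rightarrow> nat \<Rightarrow> complex) \<Rightarrow> bool" where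
  "vanishes_at_all_but_one g m p \<longleftrightarrow> (\<exists>i0\<le>m. g (p i0) \<noteq> 0 \<and> (\<forall>i\<le>m. i \<noteq> i0 \<longrightarrow> g (p i) = 0))"

lemma ex_mpoly_iff_ex_ff_span:
  "(\<exists>Q. mpoly_deg_le n d Q \<and> vanishes_at_all_but_one (eval_c Q) m p) \<longleftrightarrow>
    (\<exists>g. ff_span n d g \<and> vanishes_at_all_but_one g m p)"
  using poly_fun_eval_c poly_fun_imp_ff_span ff_span_imp_poly_fun poly_fun_imp_mpoly by metis

section \<open>Partial derivatives of Laurent monomials\<close>

definition torus_monomial :: "nat \<Rightarrow> ((nat \<Rightarrow> complex) \<Rightarrow> complex) \<Rightarrow> complex \<Rightarrow> (nat \<Rightarrow> int) \<Rightarrow> bool" where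
  "torus_monomial n f c s \<longleftrightarrow> (\<forall>x. torus_pt n x \<longrightarrow> f x = c * (\<Prod>l<n. x l powi s l))"

lemma prod_powi_remove:
  fixes x :: "nat \<Rightarrow> complex"
  assumes "j < n"
  shows "(\<Prod>l<n. x l powi s l) = x j powi s j * (\<Prod>l\<in>{..<n}-{j}. x l powi s l)"
  using assms by (simp add: prod.remove)

text \<open>Only the values of f on the torus matter: the torus is open, so the derivative in the
  j-th direction at a torus point is determined by f near that point.\<close>
lemma torus_monomial_partial:
  assumes f: "torus_monomial n f c s" and j: "j < n"
  shows "torus_monomial n (partial j f) (c * of_int (s j)) (s(j := s j - 1))"
  unfolding torus_monomial_def
proof (intro allI impI)
  fix x assume x: "torus_pt n x"
  define K where "K = (\<Prod>l\<in>{..<n}-{j}. x l powi s l)"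
  have xj: "x j \<noteq> 0" using x j by (simp add: torus_pt_def)
  have "eventually (\<lambda>t. t \<noteq> 0) (nhds (x j))"
    by (rule t1_space_nhds) (use xj in auto)
  then have near: "eventually (\<lambda>t. f (x(j := t)) = c * K * t powi s j) (nhds (x j))"
  proof eventually_elim
    case (elim t)
    then have "torus_pt n (x(j := t))" using x by (simp add: torus_pt_def)
    then have "f (x(j := t)) = c * (t powi s j * (\<Prod>l\<in>{..<n}-{j}. (x(j := t)) l powi s l))"
      using f prod_powi_remove[OF j, of "x(j := t)" s] by (simp add: torus_monomial_def)
    also have "(\<Prod>l\<in>{..<n}-{j}. (x(j := t)) l powi s l) = K"
      unfolding K_def by (rule prod.cong) auto
    finally show ?case by (simp only: ac_simps)
  qed
  have "((\<lambda>t. t powi s j) has_field_derivative of_int (s j) * x j powi (s j - 1) * 1) (at (x j))"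
    by (rule DERIV_power_int) (use xj in \<open>auto intro: DERIV_ident\<close>)
  then have "((\<lambda>t. c * K * t powi s j) has_field_derivative c * K * (of_int (s j) * x j powi (s j - 1)))
      (at (x j))"
    using DERIV_cmult by fastforce
  then have "partial j f x = c * K * (of_int (s j) * x j powi (s j - 1))"
    unfolding partial_def by (subst deriv_cong_ev[OF near refl]) (rule DERIV_imp_deriv)
  moreover have "(\<Prod>l<n. x l powi (s(j := s j - 1)) l) = x j powi (s j - 1) * K"
  proof -
    have "(\<Prod>l\<in>{..<n}-{j}. x l powi (s(j := s j - 1)) l) = K"
      unfolding K_def by (rule prod.cong) auto
    then show ?thesis using prod_powi_remove[OF j, of x "s(j := s j - 1)"] by simp
  qed
  ultimately show "partial j f x = c * of_int (s j) * (\<Prod>l<n. x l powi (s(j := s j - 1)) l)"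
    by (simp add: mult_ac)
qed

lemma torus_monomial_partial_pow:
  assumes f: "torus_monomial n f c s" and j: "j < n"
  shows "torus_monomial n ((partial j ^^ a) f)
    (c * (\<Prod>l<a. (of_int (s j) - of_nat l))) (s(j := s j - int a))"
proof (induction a)
  case 0
  then show ?case using f by simp
next
  case (Suc a)
  have "torus_monomial n (partial j ((partial j ^^ a) f))
      (c * (\<Prod>l<a. (of_int (s j) - of_nat l)) * of_int ((s(j := s j - int a)) j))
      ((s(j := s j - int a))(j := (s(j := s j - int a)) j - 1))"
    by (rule torus_monomial_partial[OF Suc j])
  moreover have "(s(j := s j - int a))(j := (s(j := s j - int a)) j - 1) = s(j := s j - int (Suc a))"
    by (simp add: fun_eq_iff)
  moreover have "c * (\<Prod>l<a. (of_int (s j) - of_nat l)) * of_int ((s(j := s j - int a)) j)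
      = c * (\<Prod>l<Suc a. (of_int (s j) - of_nat l))"
    by (simp add: prod.lessThan_Suc mult_ac)
  ultimately show ?case by (simp only: funpow.simps o_apply)
qed

lemma torus_monomial_foldr_partial:
  assumes f: "torus_monomial n f c s" and "distinct js" and "set js \<subseteq> {..<n}"
  shows "torus_monomial n (foldr (\<lambda>j g. (partial j ^^ \<alpha> j) g) js f)
     (c * (\<Prod>j\<in>set js. \<Prod>l<\<alpha> j. (of_int (s j) - of_nat l)))
     (\<lambda>i. if i \<in> set js then s i - int (\<alpha> i) else s i)"
  using assms(2,3)
proof (induction js)
  case Nil
  then show ?case using f by simp
next
  case (Cons j js)
  let ?s = "\<lambda>i. if i \<in> set js then s i - int (\<alpha> i) else s i"
  have j: "j < n" "j \<notin> set js" using Cons.prems by auto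
  have "torus_monomial n ((partial j ^^ \<alpha> j) (foldr (\<lambda>j g. (partial j ^^ \<alpha> j) g) js f))
    (c * (\<Prod>j\<in>set js. \<Prod>l<\<alpha> j. (of_int (s j) - of_nat l)) * (\<Prod>l<\<alpha> j. (of_int (?s j) - of_nat l)))
    (?s(j := ?s j - int (\<alpha> j)))"
    using Cons by (intro torus_monomial_partial_pow j(1)) simp_all
  moreover have "?s(j := ?s j - int (\<alpha> j)) = (\<lambda>i. if i \<in> set (j # js) then s i - int (\<alpha> i) else s i)"
    using j by (auto simp: fun_eq_iff)
  ultimately show ?case
    using j by (simp add: mult_ac)
qed

lemma higher_partial_laurent_mono:
  assumes x: "torus_pt n x"
  shows "higher_partial n \<alpha> (laurent_mono n r) x =
     falling_monomial n \<alpha> (\<lambda>j. of_int (r j)) * (\<Prod>l<n. x l powi (r l - int (\<alpha> l)))"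
proof -
  have "torus_monomial n (laurent_mono n r) 1 r"
    by (simp add: torus_monomial_def laurent_mono_def)
  then have "torus_monomial n (higher_partial n \<alpha> (laurent_mono n r))
     (1 * (\<Prod>j\<in>set [0..<n]. \<Prod>l<\<alpha> j. (of_int (r j) - of_nat l)))
     (\<lambda>i. if i \<in> set [0..<n] then r i - int (\<alpha> i) else r i)"
    unfolding higher_partial_def by (rule torus_monomial_foldr_partial) auto
  moreover have "(\<Prod>l<n. x l powi (if l \<in> set [0..<n] then r l - int (\<alpha> l) else r l)) =
      (\<Prod>l<n. x l powi (r l - int (\<alpha> l)))"
    by (rule prod.cong) auto
  ultimately show ?thesis
    using x by (simp add: torus_monomial_def falling_monomial_def atLeast0LessThan)
qed

section \<open>Annihilators of finitely many vectors\<close>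

definition pairing :: "nat \<Rightarrow> (nat \<Rightarrow> 'a::comm_ring) \<Rightarrow> (nat \<Rightarrow> 'a) \<Rightarrow> 'a" where
  "pairing m a y = (\<Sum>j\<le>m. a j * y j)"

definition annihilates :: "nat \<Rightarrow> (nat \<Rightarrow> 'a::comm_ring) \<Rightarrow> 'b set \<Rightarrow> ('b \<Rightarrow> nat \<Rightarrow> 'a) \<Rightarrow> bool" where
  "annihilates m a A v \<longleftrightarrow> (\<forall>\<alpha>\<in>A. pairing m a (v \<alpha>) = 0)"

definition in_span_on :: "nat \<Rightarrow> 'b set \<Rightarrow> ('b \<Rightarrow> nat \<Rightarrow> 'a::comm_ring) \<Rightarrow> (nat \<Rightarrow> 'a) \<Rightarrow> bool" where
  "in_span_on m A v y \<longleftrightarrow> (\<exists>c. \<forall>j\<le>m. y j = (\<Sum>\<alpha>\<in>A. c \<alpha> * v \<alpha> j))"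

lemma pairing_add_scale_left:
  "pairing m (\<lambda>j. a j + t * b j) y = pairing m a y + t * pairing m b y"
  by (simp add: pairing_def algebra_simps sum.distrib sum_distrib_left)

lemma pairing_diff_scale_right:
  "pairing m a (\<lambda>j. y j - t * w j) = pairing m a y - t * pairing m a w"
  by (simp add: pairing_def algebra_simps sum_subtractf sum_distrib_left)

lemma pairing_commute: "pairing m a y = pairing m y a"
  by (simp add: pairing_def mult.commute)

lemma pairing_unit_vector:
  fixes a :: "nat \<Rightarrow> 'a::comm_ring_1"
  shows "i \<le> m \<Longrightarrow> pairing m a (\<lambda>j. if j = i then 1 else 0) = a i"
  by (simp add: pairing_def if_distrib sum.delta cong: if_cong)

lemma annihilates_add_scale:
  "annihilates m a A v \<Longrightarrow> annihilates m b A v \<Longrightarrow> annihilates m (\<lambda>j. a j + t * b j) A v"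
  by (simp add: annihilates_def pairing_add_scale_left)

lemma annihilates_in_span_on:
  assumes "annihilates m a A v" "in_span_on m A v y"
  shows "pairing m a y = 0"
proof -
  obtain c where c: "\<forall>j\<le>m. y j = (\<Sum>\<alpha>\<in>A. c \<alpha> * v \<alpha> j)"
    using assms(2) by (auto simp: in_span_on_def)
  have "pairing m a y = (\<Sum>j\<le>m. \<Sum>\<alpha>\<in>A. c \<alpha> * (a j * v \<alpha> j))"
    using c by (simp add: pairing_def sum_distrib_left mult_ac)
  also have "\<dots> = (\<Sum>\<alpha>\<in>A. c \<alpha> * pairing m a (v \<alpha>))"
    by (subst sum.swap) (simp add: pairing_def sum_distrib_left)
  also have "\<dots> = 0"
    using assms(1) by (simp add: annihilates_def)
  finally show ?thesis .
qed

lemma in_span_on_insert: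
  assumes "in_span_on m F v (\<lambda>j. y j - t * v w j)" "finite F" "w \<notin> F"
  shows "in_span_on m (insert w F) v y"
proof -
  obtain c where c: "\<forall>j\<le>m. y j - t * v w j = (\<Sum>\<alpha>\<in>F. c \<alpha> * v \<alpha> j)"
    using assms(1) by (auto simp: in_span_on_def)
  have "(\<Sum>\<alpha>\<in>F. (c(w := t)) \<alpha> * v \<alpha> j) = (\<Sum>\<alpha>\<in>F. c \<alpha> * v \<alpha> j)" for j
    using assms(3) by (intro sum.cong) auto
  then have "\<forall>j\<le>m. y j = (\<Sum>\<alpha>\<in>insert w F. (c(w := t)) \<alpha> * v \<alpha> j)"
    using c assms(2,3) by (simp add: algebra_simps)
  then show ?thesis by (auto simp: in_span_on_def)
qed

lemma annihilator_elimination: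
  fixes v :: "'b \<Rightarrow> nat \<Rightarrow> 'a::field"
  assumes a: "annihilates m a F v" and b: "annihilates m b F v" "pairing m b (v w) \<noteq> 0"
  defines "s \<equiv> - (pairing m a (v w) / pairing m b (v w))"
  shows "annihilates m (\<lambda>j. a j + s * b j) (insert w F) v"
    and "pairing m (\<lambda>j. a j + s * b j) y =
      pairing m a (\<lambda>j. y j - pairing m b y / pairing m b (v w) * v w j)"
proof -
  have "pairing m (\<lambda>j. a j + s * b j) (v w) = 0"
    unfolding pairing_add_scale_left s_def using b(2) by simp
  then show "annihilates m (\<lambda>j. a j + s * b j) (insert w F) v"
    using annihilates_add_scale[OF a b(1), of s] by (simp add: annihilates_def)
  show "pairing m (\<lambda>j. a j + s * b j) y =
      pairing m a (\<lambda>j. y j - pairing m b y / pairing m b (v w) * v w j)"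
    unfolding pairing_add_scale_left pairing_diff_scale_right s_def by simp
qed

text \<open>The Fredholm alternative, proved by Gaussian elimination on the vectors v \<alpha>.\<close>
lemma in_span_on_or_separating_annihilator:
  fixes v :: "'b \<Rightarrow> nat \<Rightarrow> 'a::field"
  assumes "finite A"
  shows "in_span_on m A v y \<or> (\<exists>a. annihilates m a A v \<and> pairing m a y \<noteq> 0)"
  using assms
proof (induction A arbitrary: y rule: finite_induct)
  case empty
  show ?case
  proof (cases "\<forall>j\<le>m. y j = 0")
    case True
    then show ?thesis by (simp add: in_span_on_def)
  next
    case False
    then obtain i where i: "i \<le> m" "y i \<noteq> 0" by auto
    then have "pairing m (\<lambda>j. if j = i then 1 else 0) y \<noteq> 0"
      by (subst pairing_commute) (simp add: pairing_unit_vector)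
    then show ?thesis by (auto simp: annihilates_def)
  qed
next
  case (insert w F)
  from insert.IH[of "v w"] show ?case
  proof (elim disjE exE conjE)
    assume w: "in_span_on m F v (v w)"
    from insert.IH[of y] show ?case
    proof (elim disjE exE conjE)
      assume "in_span_on m F v y"
      then have "in_span_on m F v (\<lambda>j. y j - 0 * v w j)" by simp
      from in_span_on_insert[OF this insert.hyps(1,2)] show ?case by (rule disjI1)
    next
      fix a assume "annihilates m a F v" "pairing m a y \<noteq> 0"
      moreover have "pairing m a (v w) = 0"
        using annihilates_in_span_on[OF \<open>annihilates m a F v\<close> w] .
      ultimately show ?case by (auto simp: annihilates_def)
    qed
  next
    fix b assume b: "annihilates m b F v" "pairing m b (v w) \<noteq> 0"
    define t where "t = pairing m b y / pairing m b (v w)"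
    from insert.IH[of "\<lambda>j. y j - t * v w j"] show ?case
    proof (elim disjE exE conjE)
      assume "in_span_on m F v (\<lambda>j. y j - t * v w j)"
      from in_span_on_insert[OF this insert.hyps(1,2)] show ?case by (rule disjI1)
    next
      fix a assume a: "annihilates m a F v" "pairing m a (\<lambda>j. y j - t * v w j) \<noteq> 0"
      then show ?case
        using annihilator_elimination(1)[OF a(1) b] annihilator_elimination(2)[OF a(1) b, of y]
        unfolding t_def by auto
    qed
  qed
qed

lemma ex_generic_combination:
  fixes a b :: "nat \<Rightarrow> 'a::field"
  assumes "infinite (UNIV :: 'a set)" "finite I" "\<forall>i\<in>I. a i \<noteq> 0 \<or> b i \<noteq> 0"
  shows "\<exists>t. \<forall>i\<in>I. b i + t * a i \<noteq> 0"
proof -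
  obtain t where t: "t \<notin> (\<lambda>i. - b i / a i) ` I"
    using ex_new_if_finite[OF assms(1)] assms(2) by blast
  have "b i + t * a i \<noteq> 0" if "i \<in> I" for i
  proof (cases "a i = 0")
    case True
    then show ?thesis using assms(3) that by auto
  next
    case False
    then have "t \<noteq> - b i / a i" using t that by auto
    with False show ?thesis by (auto simp: field_simps add_eq_0_iff)
  qed
  then show ?thesis by blast
qed

lemma ex_nowhere_zero_annihilator:
  fixes v :: "'b \<Rightarrow> nat \<Rightarrow> 'a::field"
  assumes "infinite (UNIV :: 'a set)"
    and each: "\<forall>i\<le>m. \<exists>a. annihilates m a A v \<and> a i \<noteq> 0"
  shows "\<exists>a. annihilates m a A v \<and> (\<forall>i\<le>m. a i \<noteq> 0)"
proof -
  have "\<exists>a. annihilates m a A v \<and> (\<forall>i<p. a i \<noteq> 0)" if "p \<le> Suc m" for p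
    using that
  proof (induction p)
    case 0
    have "annihilates m (\<lambda>_. 0) A v" by (simp add: annihilates_def pairing_def)
    then show ?case by blast
  next
    case (Suc p)
    then obtain b where b: "annihilates m b A v" "\<forall>i<p. b i \<noteq> 0" by auto
    obtain a where a: "annihilates m a A v" "a p \<noteq> 0"
      using each Suc.prems by auto
    have "\<forall>i\<in>{..<Suc p}. a i \<noteq> 0 \<or> b i \<noteq> 0"
      using a(2) b(2) less_Suc_eq by auto
    then obtain t where "\<forall>i\<in>{..<Suc p}. b i + t * a i \<noteq> 0"
      using ex_generic_combination[OF assms(1)] by blast
    then show ?case
      using annihilates_add_scale[OF b(1) a(1)] by auto
  qed
  from this[of "Suc m"] show ?thesis by auto
qed

section \<open>Osculating hyperplanes\<close>

lemma ff_span_pairing_eq_0: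
  assumes "ff_span n d g" "d \<le> k"
    and b: "annihilates m b {\<alpha>. multidegree n \<alpha> \<le> k} (\<lambda>\<alpha> i. falling_monomial n \<alpha> (p i))"
  shows "pairing m b (\<lambda>i. g (p i)) = 0"
  using assms(1,2)
proof (induction rule: ff_span.induct)
  case (gen \<alpha> d)
  then show ?case using b by (simp add: annihilates_def)
next
  case (add d f g)
  then show ?case by (simp add: pairing_def distrib_left sum.distrib)
next
  case (scale d g c)
  then have "c * pairing m b (\<lambda>i. g (p i)) = 0" by simp
  then show ?case by (simp add: pairing_def sum_distrib_left mult_ac)
qed

text \<open>On the torus, the Taylor coefficients of x^r of order \<alpha> are x^(r - \<alpha>) times the falling
  factorial of r; dividing out the common nonzero factor x^(-\<alpha>) rescales a by x^r.\<close>
lemma contains_osc_iff_annihilates: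
  assumes x: "torus_pt n x"
  shows "contains_osc n m r k x a \<longleftrightarrow>
    annihilates m (\<lambda>i. a i * laurent_mono n (r i) x) {\<alpha>. multidegree n \<alpha> \<le> k}
      (\<lambda>\<alpha> i. falling_monomial n \<alpha> (\<lambda>j. of_int (r i j)))"
proof -
  define D where "D \<alpha> = (\<Prod>l<n. x l powi (- int (\<alpha> l)))" for \<alpha>
  have rescale: "(\<Sum>i\<le>m. a i * higher_partial n \<alpha> (laurent_mono n (r i)) x) =
      D \<alpha> *
      pairing m (\<lambda>i. a i * laurent_mono n (r i) x) (\<lambda>i. falling_monomial n \<alpha> (\<lambda>j. of_int (r i j)))"
    for \<alpha>
  proof -
    have "(\<Prod>l<n. x l powi (r i l - int (\<alpha> l))) = laurent_mono n (r i) x * D \<alpha>" for i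
    proof -
      have "(\<Prod>l<n. x l powi (r i l - int (\<alpha> l))) = (\<Prod>l<n. x l powi r i l * x l powi (- int (\<alpha> l)))"
        by (rule prod.cong) (use x in \<open>auto simp: torus_pt_def power_int_add[symmetric]\<close>)
      then show ?thesis by (simp add: prod.distrib laurent_mono_def D_def)
    qed
    then show ?thesis
      by (simp add: higher_partial_laurent_mono[OF x] pairing_def sum_distrib_left mult_ac)
  qed
  have "D \<alpha> \<noteq> 0" for \<alpha>
    using x by (simp add: D_def torus_pt_def)
  then show ?thesis
    by (simp add: contains_osc_def annihilates_def multidegree_def rescale)
qed

lemma osc_hyperplane_coordinate_eq_0:
  assumes g: "ff_span n k g" and i0: "i0 \<le> m" "g (\<lambda>j. of_int (r i0 j)) \<noteq> 0"
    and others: "\<forall>i\<le>m. i \<noteq> i0 \<longrightarrow> g (\<lambda>j. of_int (r i j)) = 0"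
    and a: "a \<in> osc_hyperplanes n m r k"
  shows "a i0 = 0"
proof -
  obtain x where x: "torus_pt n x" "contains_osc n m r k x a"
    using a by (auto simp: osc_hyperplanes_def)
  let ?b = "\<lambda>i. a i * laurent_mono n (r i) x"
  have "pairing m ?b (\<lambda>i. g (\<lambda>j. of_int (r i j))) = 0"
    using x by (intro ff_span_pairing_eq_0[OF g order_refl]) (simp add: contains_osc_iff_annihilates)
  moreover have "pairing m ?b (\<lambda>i. g (\<lambda>j. of_int (r i j))) = ?b i0 * g (\<lambda>j. of_int (r i0 j))"
    unfolding pairing_def using i0(1) others by (subst sum.remove[of _ i0]) auto
  moreover have "laurent_mono n (r i0) x \<noteq> 0"
    using x(1) by (simp add: laurent_mono_def torus_pt_def)
  ultimately show ?thesis using i0(2) by simp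
qed

lemma annihilator_nonzero_at_if_not_separated:
  assumes "finite A" "A \<subseteq> {\<alpha>. multidegree n \<alpha> \<le> k}" "i \<le> m"
    and no_sep: "\<not> (\<exists>g. ff_span n k g \<and> vanishes_at_all_but_one g m p)"
  shows "\<exists>a. annihilates m a A (\<lambda>\<alpha> i. falling_monomial n \<alpha> (p i)) \<and> a i \<noteq> 0"
proof -
  let ?e = "\<lambda>j. if j = i then 1 else 0 :: complex"
  from in_span_on_or_separating_annihilator[OF assms(1), of m "\<lambda>\<alpha> i. falling_monomial n \<alpha> (p i)" ?e]
  show ?thesis
  proof (elim disjE exE conjE)
    assume "in_span_on m A (\<lambda>\<alpha> i. falling_monomial n \<alpha> (p i)) ?e"
    then obtain c where c: "\<forall>j\<le>m. ?e j = (\<Sum>\<alpha>\<in>A. c \<alpha> * falling_monomial n \<alpha> (p j))"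
      by (auto simp: in_span_on_def)
    let ?g = "\<lambda>z. \<Sum>\<alpha>\<in>A. c \<alpha> * falling_monomial n \<alpha> z"
    have "ff_span n k ?g"
      using assms(1,2) by (intro ff_span_sum ff_span.scale ff_span.gen) auto
    moreover have "vanishes_at_all_but_one ?g m p"
      unfolding vanishes_at_all_but_one_def using c assms(3) by (intro exI[of _ i]) auto
    ultimately show ?thesis using no_sep by blast
  next
    fix a assume "annihilates m a A (\<lambda>\<alpha> i. falling_monomial n \<alpha> (p i))" "pairing m a ?e \<noteq> 0"
    then show ?thesis by (intro exI[of _ a]) (simp add: pairing_unit_vector[OF assms(3)])
  qed
qed

lemma falling_monomial_truncate:
  "falling_monomial n (\<lambda>j. if j < n then \<alpha> j else 0) = falling_monomial n \<alpha>"
  unfolding falling_monomial_def by (intro ext prod.cong) auto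

lemma multidegree_truncate:
  "multidegree n (\<lambda>j. if j < n then \<alpha> j else 0) = multidegree n \<alpha>"
  unfolding multidegree_def by (rule sum.cong) auto

text \<open>Exponents of total degree at most k supported below n form a finite set, and up to
  truncation every falling-factorial monomial of degree at most k comes from it.\<close>
lemma ex_nowhere_zero_annihilator_of_falling_monomials:
  assumes no_sep: "\<not> (\<exists>g. ff_span n k g \<and> vanishes_at_all_but_one g m p)"
  shows "\<exists>a. annihilates m a {\<alpha>. multidegree n \<alpha> \<le> k} (\<lambda>\<alpha> i. falling_monomial n \<alpha> (p i)) \<and>
    (\<forall>i\<le>m. a i \<noteq> 0)"
proof -
  let ?v = "\<lambda>\<alpha> i. falling_monomial n \<alpha> (p i)"
  define A where "A = {\<alpha>. \<forall>j. (j \<in> {..<n} \<longrightarrow> \<alpha> j \<in> {..k}) \<and> (j \<notin> {..<n} \<longrightarrow> \<alpha> j = 0)} \<inter>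
      {\<alpha>. multidegree n \<alpha> \<le> k}"
  have "finite A"
    unfolding A_def by (intro finite_Int disjI1 finite_set_of_finite_funs) auto
  moreover have "A \<subseteq> {\<alpha>. multidegree n \<alpha> \<le> k}"
    by (auto simp: A_def)
  ultimately have "\<forall>i\<le>m. \<exists>a. annihilates m a A ?v \<and> a i \<noteq> 0"
    using annihilator_nonzero_at_if_not_separated[OF _ _ _ no_sep] by blast
  then obtain a where a: "annihilates m a A ?v" "\<forall>i\<le>m. a i \<noteq> 0"
    using ex_nowhere_zero_annihilator[OF infinite_UNIV_char_0] by blast
  have "pairing m a (?v \<alpha>) = 0" if \<alpha>: "multidegree n \<alpha> \<le> k" for \<alpha>
  proof -
    have "\<alpha> j \<le> k" if "j < n" for j
    proof -
      have "\<alpha> j \<le> multidegree n \<alpha>"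
        unfolding multidegree_def by (rule member_le_sum) (use that in auto)
      with \<alpha> show ?thesis by simp
    qed
    then have "(\<lambda>j. if j < n then \<alpha> j else 0) \<in> A"
      using \<alpha> by (auto simp: A_def multidegree_truncate)
    then show ?thesis
      using a(1) by (auto simp: annihilates_def falling_monomial_truncate)
  qed
  then show ?thesis
    using a(2) by (auto simp: annihilates_def)
qed

lemma ex_osc_hyperplane_in_torus:
  assumes no_sep: "\<not> (\<exists>g. ff_span n k g \<and> vanishes_at_all_but_one g m (\<lambda>i j. of_int (r i j)))"
  shows "\<exists>a\<in>osc_hyperplanes n m r k. \<forall>i\<le>m. a i \<noteq> 0"
proof -
  obtain a where a: "\<forall>i\<le>m. a i \<noteq> 0" and annihil:
    "annihilates m a {\<alpha>. multidegree n \<alpha> \<le> k} (\<lambda>\<alpha> i. falling_monomial n \<alpha> (\<lambda>j. of_int (r i j)))"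
    using ex_nowhere_zero_annihilator_of_falling_monomials[OF no_sep] by blast
  define a' where "a' i = (if i \<le> m then a i else 0)" for i
  have "contains_osc n m r k (\<lambda>_. 1) a'"
    using annihil
    by (simp add: contains_osc_iff_annihilates torus_pt_def laurent_mono_def annihilates_def
        pairing_def a'_def)
  moreover have "torus_pt n (\<lambda>_. 1)" "a' \<in> aff_space m" "a' 0 \<noteq> 0"
    using a by (simp_all add: torus_pt_def aff_space_def a'_def)
  ultimately have "a' \<in> osc_hyperplanes n m r k"
    unfolding osc_hyperplanes_def by blast
  moreover have "\<forall>i\<le>m. a' i \<noteq> 0"
    using a by (simp add: a'_def)
  ultimately show ?thesis by blast
qed

section \<open>Tropicalization\<close>

lemma init_form_single: "init_form w (Poly_Mapping.single u c) = Poly_Mapping.single u c"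
proof -
  have "(\<lambda>v. if v \<in> Poly_Mapping.keys (Poly_Mapping.single u c) \<and>
      wt w v = Min (wt w ` Poly_Mapping.keys (Poly_Mapping.single u c))
      then Poly_Mapping.lookup (Poly_Mapping.single u c) v else 0) =
      Poly_Mapping.lookup (Poly_Mapping.single u c)"
    by (auto simp: fun_eq_iff lookup_single in_keys_iff)
  then show ?thesis unfolding init_form_def by simp
qed

lemma init_form_zero_weight: "init_form (\<lambda>_. 0) F = F"
proof -
  have "(if v \<in> Poly_Mapping.keys F \<and> wt (\<lambda>_. 0) v = Min (wt (\<lambda>_. 0) ` Poly_Mapping.keys F)
      then Poly_Mapping.lookup F v else 0) = Poly_Mapping.lookup F v" for v
  proof (cases "v \<in> Poly_Mapping.keys F")
    case True
    then have "wt (\<lambda>_. 0) ` Poly_Mapping.keys F = {0}" by (auto simp: wt_def)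
    with True show ?thesis by (simp add: wt_def)
  next
    case False
    then show ?thesis by (simp add: in_keys_iff)
  qed
  then show ?thesis unfolding init_form_def by simp
qed

text \<open>The coordinate x_i0 lies in the ideal, and all its initial forms are monomials.\<close>
lemma trop_cone_empty_if_coordinate_eq_0:
  assumes "i0 \<le> m" "\<forall>a\<in>Y. a i0 = 0"
  shows "trop_cone m Y = {}"
proof -
  let ?F = "Poly_Mapping.single (Poly_Mapping.single i0 1) (1::rat)"
  have "?F \<in> ideal_Q m Y"
    using assms by (simp add: ideal_Q_def vars_below_def eval_q_def)
  moreover have "?F \<noteq> 0"
    by (metis lookup_single_eq one_neq_zero lookup_zero)
  moreover have "is_monomial (init_form w ?F)" for w
    unfolding init_form_single is_monomial_def by (intro exI[of _ "Poly_Mapping.single i0 1"] exI[of _ "1::rat"]) simp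
  ultimately show ?thesis
    unfolding trop_cone_def by blast
qed

text \<open>A point with no vanishing coordinate kills no monomial, so no polynomial of the ideal is a
  monomial, while the zero weight leaves every polynomial unchanged.\<close>
lemma zero_weight_in_trop_cone:
  assumes a: "a \<in> Y" "\<forall>i\<le>m. a i \<noteq> 0"
  shows "(\<lambda>_. 0) \<in> trop_cone m Y"
proof -
  have "\<not> is_monomial F" if F: "F \<in> ideal_Q m Y" for F
  proof
    assume "is_monomial F"
    then obtain u c where uc: "c \<noteq> 0" "F = Poly_Mapping.single u c"
      unfolding is_monomial_def by blast
    have "\<forall>i\<in>Poly_Mapping.keys u. i \<le> m"
      using F uc by (auto simp: ideal_Q_def vars_below_def)
    then have "of_rat c * (\<Prod>i\<in>Poly_Mapping.keys u. a i ^ Poly_Mapping.lookup u i) \<noteq> 0"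
      using a(2) uc(1) by simp
    moreover have "eval_q F a = of_rat c * (\<Prod>i\<in>Poly_Mapping.keys u. a i ^ Poly_Mapping.lookup u i)"
      using uc by (simp add: eval_q_def)
    ultimately have "eval_q F a \<noteq> 0" by argo
    moreover have "eval_q F a = 0"
      using F a(1) by (simp add: ideal_Q_def)
    ultimately show False by contradiction
  qed
  then show ?thesis by (simp add: trop_cone_def init_form_zero_weight)
qed

lemma zariski_closure_coordinate_eq_0:
  assumes "i0 \<le> m" "\<forall>b\<in>S. b i0 = 0" "a \<in> zariski_closure m S"
  shows "a i0 = 0"
proof -
  let ?F = "Poly_Mapping.single (Poly_Mapping.single i0 1) (1::complex)"
  have "eval_c ?F z = z i0" for z
    by (simp add: eval_c_def)
  moreover have "vars_below (Suc m) ?F"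
    using assms(1) by (simp add: vars_below_def)
  ultimately show ?thesis
    using assms(2,3) unfolding zariski_closure_def by auto
qed

lemma osc_hyperplanes_subset_dual_cone: "osc_hyperplanes n m r k \<subseteq> dual_cone n m r k"
  by (auto simp: dual_cone_def zariski_closure_def osc_hyperplanes_def)

lemma trop_cone_dual_cone_empty_iff:
  "trop_cone m (dual_cone n m r k) = {} \<longleftrightarrow>
    (\<exists>g. ff_span n k g \<and> vanishes_at_all_but_one g m (\<lambda>i j. of_int (r i j)))"
  (is "?Y_empty \<longleftrightarrow> (\<exists>g. ff_span n k g \<and> vanishes_at_all_but_one g m ?p)")
proof
  assume empty: ?Y_empty
  show "\<exists>g. ff_span n k g \<and> vanishes_at_all_but_one g m ?p"
  proof (rule ccontr)
    assume "\<not> ?thesis"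
    then obtain a where "a \<in> osc_hyperplanes n m r k" "\<forall>i\<le>m. a i \<noteq> 0"
      using ex_osc_hyperplane_in_torus by blast
    then have "(\<lambda>_. 0) \<in> trop_cone m (dual_cone n m r k)"
      using osc_hyperplanes_subset_dual_cone by (blast intro: zero_weight_in_trop_cone)
    with empty show False by simp
  qed
next
  assume "\<exists>g. ff_span n k g \<and> vanishes_at_all_but_one g m ?p"
  then obtain g i0 where g: "ff_span n k g" "i0 \<le> m" "g (?p i0) \<noteq> 0"
    "\<forall>i\<le>m. i \<noteq> i0 \<longrightarrow> g (?p i) = 0"
    by (auto simp: vanishes_at_all_but_one_def)
  then have "\<forall>b\<in>osc_hyperplanes n m r k. b i0 = 0"
    using osc_hyperplane_coordinate_eq_0 by blast
  then have "\<forall>a\<in>dual_cone n m r k. a i0 = 0"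
    using zariski_closure_coordinate_eq_0[OF g(2)] unfolding dual_cone_def by blast
  then show ?Y_empty
    by (rule trop_cone_empty_if_coordinate_eq_0[OF g(2)])
qed

theorem corollary5p6:
  fixes n m k :: nat and r :: "nat \<Rightarrow> nat \<Rightarrow> int"
  assumes distinct: "inj_on r {..m}"
    and in_Zn: "\<forall>i\<le>m. \<forall>j\<ge>n. r i j = 0"
    and spans: "\<forall>v::nat \<Rightarrow> int. \<exists>c::nat \<Rightarrow> int. \<forall>j<n. v j = (\<Sum>i\<le>m. c i * r i j)"
  shows "trop_proj m (dual_cone n m r k) = {} \<longleftrightarrow>
    (\<exists>Q::complex mpoly. vars_below n Q \<and> (\<forall>u\<in>Poly_Mapping.keys Q. total_deg u \<le> k) \<and>
       (\<exists>i0\<le>m. eval_c Q (\<lambda>j. of_int (r i0 j)) \<noteq> 0 \<and>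
          (\<forall>i\<le>m. i \<noteq> i0 \<longrightarrow> eval_c Q (\<lambda>j. of_int (r i j)) = 0)))"
proof -
  have "trop_proj m (dual_cone n m r k) = {} \<longleftrightarrow> trop_cone m (dual_cone n m r k) = {}"
    by (simp add: trop_proj_def)
  then show ?thesis
    using trop_cone_dual_cone_empty_iff ex_mpoly_iff_ex_ff_span[of n k m "\<lambda>i j. of_int (r i j)"]
    unfolding mpoly_deg_le_def vanishes_at_all_but_one_def conj_assoc by simp
qed

end
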